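(* Let $f:\mathbb{R}^n\to\mathbb{R}$ be of class $C^{2+}$ with $L_f$-Lipschitz continuous gradient, let $g:\mathbb{R}^n\to\mathbb{R}\cup\{+\infty\}$ be proper, lower semicontinuous and $\rho$-weakly convex, let $\varphi=f+g$ with $\operatorname{argmin}\varphi\neq\emptyset$, and suppose $\{x:\varphi(x)\le\varphi(x^0)\}$ is bounded. Let $(x^k)$ be generated by the NTRA algorithm described in the context, and suppose that there is $M>0$ with $\|B_k\|\le M$ for all $k$ and there is $\beta\in(0,1)$ with $m_k(0)-m_k(d^k)\ge\beta\|\nabla\varphi_\gamma(x^k)\|\min\{\delta_k,\|\nabla\varphi_\gamma(x^k)\|/\|B_k\|\}$ for all $k$. Then $\liminf_{k\to\infty}\|\nabla\varphi_\gamma(x^k)\|=0$.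
   Context: $C^{2+}$: twice continuously differentiable with locally Lipschitz Hessian; $\rho$-weakly convex: $g+\frac\rho2\|\cdot\|^2$ convex. $\operatorname{prox}_{\gamma g}(x)=\operatorname{argmin}_z\{g(z)+\frac1{2\gamma}\|z-x\|^2\}$, $R_\gamma(x)=\gamma^{-1}(x-\operatorname{prox}_{\gamma g}(x-\gamma\nabla f(x)))$, forward-backward envelope $\varphi_\gamma(x)=\inf_u\{f(x)+\langle\nabla f(x),u-x\rangle+g(u)+\frac1{2\gamma}\|u-x\|^2\}$. $\partial_C$: Clarke generalized Jacobian. NTRA: given $x^0$, $\gamma\in(0,\min\{1/L_f,1/\rho\})$, $\delta_0>0$, $0<\mu_1<\mu_2<1$, $0<c_1<c_2<1<c_3$; for $k=0,1,\dots$: select $P_k\in\partial_C\operatorname{prox}_{\gamma g}(x^k-\gamma\nabla f(x^k))$; $Q_k=I-\gamma\nabla^2f(x^k)$, $B_k=\gamma^{-1}Q_k(I-P_kQ_k)$; stop if $R_\gamma(x^k)=0$ and $\lambda_{\min}(B_k)\ge0$; $d^k$ is an (approximate) solution of $\min_d m_k(d):=\varphi_\gamma(x^k)+\langle\nabla\varphi_\gamma(x^k),d\rangle+\frac12\langle B_kd,d\rangle$ s.t. $\|d\|\le\delta_k$; $\rho_k=\frac{\varphi_\gamma(x^k)-\varphi_\gamma(x^k+d^k)}{m_k(0)-m_k(d^k)}$; $x^{k+1}=x^k$ if $\rho_k<\mu_1$, else $x^k+d^k$; $\delta_{k+1}=c_1\delta_k$ if $\rho_k<\mu_1$, $c_2\delta_k$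 if $\mu_1\le\rho_k<\mu_2$, $c_3\delta_k$ if $\rho_k\ge\mu_2$. *)

theory Defs
  imports "HOL-Analysis.Analysis"
begin

definition grad :: "(real^'n \<Rightarrow> real) \<Rightarrow> real^'n \<Rightarrow> real^'n" where
  "grad f x = (THE v. (f has_derivative (\<lambda>h. v \<bullet> h)) (at x))"

definition hess :: "(real^'n \<Rightarrow> real) \<Rightarrow> real^'n \<Rightarrow> real^'n^'n" where
  "hess f x = (THE H. (grad f has_derivative (\<lambda>h. H *v h)) (at x))"

definition C2plus :: "(real^'n \<Rightarrow> real) \<Rightarrow> bool" where
  "C2plus f \<longleftrightarrow>
     (\<forall>x. f differentiable (at x)) \<and>
     (\<forall>x. grad f differentiable (at x)) \<and>
     continuous_on UNIV (hess f) \<and>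
     (\<forall>x. \<exists>e>0. \<exists>K. \<forall>y\<in>ball x e. \<forall>z\<in>ball x e. norm (hess f y - hess f z) \<le> K * dist y z)"

definition lipschitz_grad :: "real \<Rightarrow> (real^'n \<Rightarrow> real) \<Rightarrow> bool" where
  "lipschitz_grad L f \<longleftrightarrow> (\<forall>x y. norm (grad f x - grad f y) \<le> L * dist x y)"

definition proper_fun :: "(real^'n \<Rightarrow> ereal) \<Rightarrow> bool" where
  "proper_fun g \<longleftrightarrow> (\<forall>x. g x \<noteq> -\<infinity>) \<and> (\<exists>x. g x \<noteq> \<infinity>)"

definition lsc_fun :: "(real^'n \<Rightarrow> ereal) \<Rightarrow> bool" where
  "lsc_fun g \<longleftrightarrow> (\<forall>x. g x \<le> Liminf (at x) g)"

definition convex_efun :: "(real^'n \<Rightarrow> ereal) \<Rightarrow> bool" where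
  "convex_efun h \<longleftrightarrow> (\<forall>x y t. 0 \<le> t \<and> t \<le> 1 \<longrightarrow>
      h (t *\<^sub>R x + (1 - t) *\<^sub>R y) \<le> ereal t * h x + ereal (1 - t) * h y)"

definition weakly_convex :: "real \<Rightarrow> (real^'n \<Rightarrow> ereal) \<Rightarrow> bool" where
  "weakly_convex \<rho> g \<longleftrightarrow> convex_efun (\<lambda>x. g x + ereal (\<rho> / 2 * (norm x)\<^sup>2))"

definition prox :: "real \<Rightarrow> (real^'n \<Rightarrow> ereal) \<Rightarrow> real^'n \<Rightarrow> real^'n" where
  "prox \<gamma> g x = (THE z. \<forall>w. g z + ereal ((norm (z - x))\<^sup>2 / (2 * \<gamma>))
                             \<le> g w + ereal ((norm (w - x))\<^sup>2 / (2 * \<gamma>)))"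

definition residual :: "real \<Rightarrow> (real^'n \<Rightarrow> real) \<Rightarrow> (real^'n \<Rightarrow> ereal) \<Rightarrow> real^'n \<Rightarrow> real^'n" where
  "residual \<gamma> f g x = (1 / \<gamma>) *\<^sub>R (x - prox \<gamma> g (x - \<gamma> *\<^sub>R grad f x))"

definition fbe :: "real \<Rightarrow> (real^'n \<Rightarrow> real) \<Rightarrow> (real^'n \<Rightarrow> ereal) \<Rightarrow> real^'n \<Rightarrow> real" where
  "fbe \<gamma> f g x = real_of_ereal (INF u. ereal (f x + grad f x \<bullet> (u - x) + (norm (u - x))\<^sup>2 / (2 * \<gamma>)) + g u)"

definition bouligand_jac :: "(real^'n \<Rightarrow> real^'n) \<Rightarrow> real^'n \<Rightarrow> (real^'n^'n) set" where
  "bouligand_jac F x = {A. \<exists>xs As. xs \<longlonglongrightarrow> x \<and> As \<longlonglongrightarrow> A \<and>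
        (\<forall>j. (F has_derivative (\<lambda>h. As j *v h)) (at (xs j)))}"

definition clarke_jac :: "(real^'n \<Rightarrow> real^'n) \<Rightarrow> real^'n \<Rightarrow> (real^'n^'n) set" where
  "clarke_jac F x = convex hull (bouligand_jac F x)"

definition lambda_min :: "real^'n^'n \<Rightarrow> real" where
  "lambda_min B = Min {l. \<exists>v. v \<noteq> 0 \<and> B *v v = l *\<^sub>R v}"

definition tr_model :: "(real^'n \<Rightarrow> real) \<Rightarrow> real^'n^'n \<Rightarrow> real^'n \<Rightarrow> real^'n \<Rightarrow> real" where
  "tr_model \<phi> B x d = \<phi> x + grad \<phi> x \<bullet> d + 1 / 2 * (d \<bullet> (B *v d))"

end

theory Submission
  imports Defs
begin

(* The forward-backward envelope equals f - (gamma/2) |grad f|^2 plus the Moreau envelope of g at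
   x - gamma grad f(x). Since gamma rho < 1, the proximal objective of the rho-weakly convex g is
   strongly convex (midpoint inequality), so prox is single-valued and Lipschitz, and the Moreau
   envelope is differentiable with gradient (z - prox z)/gamma; hence phi_gamma is C^1. With T the
   forward-backward step, phi(T x) + (1/(2 gamma) - L/2) |T x - x|^2 <= phi_gamma(x) <= phi(x), so
   phi_gamma is bounded below and its sublevel set at x^0 is bounded.
   What remains is the classical trust-region argument for a C^1 function with bounded iterates: if
   |grad phi_gamma(x^k)| > eps eventually, uniform continuity of the gradient near the iterates makes
   every step with a small radius very successful, so the radii stay bounded away from 0, successful
   steps recur infinitely often, and each lowers phi_gamma by a fixed amount, contradicting
   boundedness below. *)

section \<open>Calculus on real^'n\<close>

lemma grad_eqI:
  fixes F :: "real^'n \<Rightarrow> real"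
  assumes "(F has_derivative (\<lambda>h. v \<bullet> h)) (at x)"
  shows "grad F x = v"
  unfolding grad_def
proof (rule the_equality)
  fix w assume "(F has_derivative (\<lambda>h. w \<bullet> h)) (at x)"
  from has_derivative_unique[OF assms this] have "\<And>h. v \<bullet> h = w \<bullet> h" by metis
  from this[of "v - w"] have "(v - w) \<bullet> (v - w) = 0"
    by (simp add: inner_diff_left)
  then show "w = v" by simp
qed (rule assms)

lemma has_derivative_grad:
  fixes F :: "real^'n \<Rightarrow> real"
  assumes "F differentiable (at x)"
  shows "(F has_derivative (\<lambda>h. grad F x \<bullet> h)) (at x)"
proof -
  obtain D where D: "(F has_derivative D) (at x)"
    using assms by (auto simp: differentiable_def)
  have "D = (\<lambda>h. adjoint D 1 \<bullet> h)"
    using adjoint_works[OF has_derivative_linear[OF D], of _ 1] by (auto simp: inner_commute)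
  with D show ?thesis
    using grad_eqI by metis
qed

lemma has_derivative_hess:
  fixes F :: "real^'n \<Rightarrow> real"
  assumes "grad F differentiable (at x)"
  shows "(grad F has_derivative (\<lambda>h. hess F x *v h)) (at x)"
proof -
  obtain D where D: "(grad F has_derivative D) (at x)"
    using assms by (auto simp: differentiable_def)
  then have DH: "(grad F has_derivative (\<lambda>h. matrix D *v h)) (at x)"
    using has_derivative_linear[OF D] by simp
  have "hess F x = matrix D"
    unfolding hess_def
  proof (rule the_equality)
    fix H assume "(grad F has_derivative (\<lambda>h. H *v h)) (at x)"
    from has_derivative_unique[OF DH this] show "H = matrix D"
      by (metis matrix_eq)
  qed (rule DH)
  with DH show ?thesis by simp
qed

lemma descent_lemma:
  fixes f :: "real^'n \<Rightarrow> real"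
  assumes deriv: "\<And>y. (f has_derivative (\<lambda>h. grad f y \<bullet> h)) (at y)"
    and lip: "lipschitz_grad L f"
  shows "f u \<le> f x + grad f x \<bullet> (u - x) + L / 2 * (norm (u - x))\<^sup>2"
proof -
  define w where "w = u - x"
  define \<psi> where "\<psi> t = f (x + t *\<^sub>R w) - t * (grad f x \<bullet> w) - L / 2 * t\<^sup>2 * (norm w)\<^sup>2" for t
  have der: "(\<psi> has_real_derivative
      (grad f (x + t *\<^sub>R w) \<bullet> w - grad f x \<bullet> w - L * t * (norm w)\<^sup>2)) (at t)" for t
  proof -
    have "((\<lambda>t. f (x + t *\<^sub>R w)) has_derivative (\<lambda>s. grad f (x + t *\<^sub>R w) \<bullet> (s *\<^sub>R w))) (at t)"
      by (rule has_derivative_compose[OF _ deriv]) (auto intro!: derivative_eq_intros)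
    then have "((\<lambda>t. f (x + t *\<^sub>R w)) has_real_derivative (grad f (x + t *\<^sub>R w) \<bullet> w)) (at t)"
      by (simp add: has_field_derivative_def mult_commute_abs)
    then show ?thesis
      unfolding \<psi>_def by (auto intro!: derivative_eq_intros simp: power2_eq_square)
  qed
  have "\<psi> 1 \<le> \<psi> 0"
  proof (rule DERIV_nonpos_imp_nonincreasing[of 0 1])
    fix t :: real assume t: "0 \<le> t" "t \<le> 1"
    have "grad f (x + t *\<^sub>R w) \<bullet> w - grad f x \<bullet> w \<le> norm (grad f (x + t *\<^sub>R w) - grad f x) * norm w"
      by (metis inner_diff_left norm_cauchy_schwarz)
    also have "\<dots> \<le> (L * (t * norm w)) * norm w"
      using lip[unfolded lipschitz_grad_def, rule_format, of "x + t *\<^sub>R w" x] t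
      by (intro mult_right_mono) (auto simp: dist_norm)
    finally have "grad f (x + t *\<^sub>R w) \<bullet> w - grad f x \<bullet> w - L * t * (norm w)\<^sup>2 \<le> 0"
      by (simp add: power2_eq_square algebra_simps)
    with der show "\<exists>y. (\<psi> has_real_derivative y) (at t) \<and> y \<le> 0"
      by blast
  qed simp
  then show ?thesis
    by (simp add: \<psi>_def w_def algebra_simps)
qed

lemma has_derivative_of_quadratic_remainder:
  fixes F :: "real^'n \<Rightarrow> real"
  assumes "\<And>y. \<bar>F y - F x - l \<bullet> (y - x)\<bar> \<le> C * (norm (y - x))\<^sup>2"
  shows "(F has_derivative (\<lambda>h. l \<bullet> h)) (at x)"
  unfolding has_derivative_at
proof
  show "bounded_linear ((\<bullet>) l)"
    by (rule bounded_linear_inner_right)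
  show "(\<lambda>h. norm (F (x + h) - F x - l \<bullet> h) / norm h) \<midarrow>0\<rightarrow> 0"
  proof (rule Lim_null_comparison)
    have "norm (F (x + h) - F x - l \<bullet> h) / norm h \<le> C * norm h" for h
      using assms[of "x + h"]
      by (cases "h = 0") (auto simp: divide_le_eq power2_eq_square mult.assoc)
    then show "\<forall>\<^sub>F h in at 0. norm (norm (F (x + h) - F x - l \<bullet> h) / norm h) \<le> C * norm h"
      by simp
    show "((\<lambda>h. C * norm (h::real^'n)) \<longlongrightarrow> 0) (at 0)"
      by (auto intro!: tendsto_eq_intros)
  qed
qed

lemma first_order_remainder_le:
  fixes phi :: "'a::euclidean_space \<Rightarrow> real"
  assumes deriv: "\<And>y. (phi has_derivative (\<lambda>h. G y \<bullet> h)) (at y)"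
    and near: "\<And>z. z \<in> closed_segment y (y + h) \<Longrightarrow> norm (G z - G y) \<le> \<omega>"
  shows "\<bar>phi (y + h) - phi y - G y \<bullet> h\<bar> \<le> \<omega> * norm h"
proof -
  let ?S = "closed_segment y (y + h)"
  have "norm ((phi (y + h) - G y \<bullet> (y + h)) - (phi y - G y \<bullet> y)) \<le> \<omega> * norm ((y + h) - y)"
  proof (rule differentiable_bound[OF convex_closed_segment])
    show "((\<lambda>z. phi z - G y \<bullet> z) has_derivative (\<lambda>k. (G z - G y) \<bullet> k)) (at z within ?S)" for z
      using has_derivative_diff[OF deriv has_derivative_inner_right[OF has_derivative_ident]]
      by (simp add: inner_diff_left has_derivative_at_withinI)
    show "onorm (\<lambda>k. (G z - G y) \<bullet> k) \<le> \<omega>" if "z \<in> ?S" for z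
    proof (rule onorm_le)
      fix k
      have "norm ((G z - G y) \<bullet> k) \<le> norm (G z - G y) * norm k"
        using Cauchy_Schwarz_ineq2 by simp
      also have "\<dots> \<le> \<omega> * norm k"
        using near[OF that] by (rule mult_right_mono) simp
      finally show "norm ((G z - G y) \<bullet> k) \<le> \<omega> * norm k" .
    qed
  qed auto
  then show ?thesis
    by (simp add: inner_add_right algebra_simps)
qed

lemma uniform_first_order_approx:
  fixes phi :: "'a::euclidean_space \<Rightarrow> real"
  assumes deriv: "\<And>y. (phi has_derivative (\<lambda>h. G y \<bullet> h)) (at y)"
    and cont: "continuous_on UNIV G" and "bounded S" and "0 < \<omega>"
  obtains \<Delta> where "0 < \<Delta>"
    "\<And>y h. y \<in> S \<Longrightarrow> norm h \<le> \<Delta> \<Longrightarrow> \<bar>phi (y + h) - phi y - G y \<bullet> h\<bar> \<le> \<omega> * norm h"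
proof -
  obtain R where R: "\<And>y. y \<in> S \<Longrightarrow> norm y \<le> R"
    using \<open>bounded S\<close> by (auto simp: bounded_iff)
  define K where "K = cball (0::'a) (R + 1)"
  have "uniformly_continuous_on K G"
    unfolding K_def
    by (rule compact_uniformly_continuous[OF continuous_on_subset[OF cont] compact_cball]) simp
  then obtain \<Delta>1 where \<Delta>1: "0 < \<Delta>1"
    "\<And>y z. y \<in> K \<Longrightarrow> z \<in> K \<Longrightarrow> dist z y < \<Delta>1 \<Longrightarrow> dist (G z) (G y) < \<omega>"
    unfolding uniformly_continuous_on_def using \<open>0 < \<omega>\<close> by metis
  define \<Delta> where "\<Delta> = min 1 (\<Delta>1 / 2)"
  have "norm (G z - G y) \<le> \<omega>"
    if "y \<in> S" "norm h \<le> \<Delta>" "z \<in> closed_segment y (y + h)" for y h z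
  proof -
    have "dist z y \<le> norm h"
      using dist_in_closed_segment[OF that(3)] by (simp add: dist_norm)
    moreover have "norm z \<le> norm y + dist z y"
      using norm_triangle_sub[of z y] by (simp add: dist_norm)
    ultimately have "z \<in> K" "y \<in> K" "dist z y < \<Delta>1"
      using R[OF that(1)] that(2) \<Delta>1(1) unfolding K_def \<Delta>_def by auto
    then show ?thesis
      using \<Delta>1(2) by (simp add: dist_norm less_imp_le)
  qed
  moreover have "0 < \<Delta>"
    using \<Delta>1(1) by (simp add: \<Delta>_def)
  ultimately show ?thesis
    using that first_order_remainder_le[OF deriv] by blast
qed

section \<open>Convergence of the trust-region iteration\<close>

locale trust_region_iteration =
  fixes phi :: "real^'n \<Rightarrow> real" and B :: "nat \<Rightarrow> real^'n^'n"
    and x d :: "nat \<Rightarrow> real^'n" and \<delta> :: "nat \<Rightarrow> real"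
    and \<mu>1 \<mu>2 c1 c2 c3 M \<beta> :: real
  assumes has_derivative_phi: "\<And>y. (phi has_derivative (\<lambda>h. grad phi y \<bullet> h)) (at y)"
    and continuous_grad_phi: "continuous_on UNIV (grad phi)"
    and phi_bdd_below: "bdd_below (range phi)"
    and level_bounded: "bounded {y. phi y \<le> phi (x 0)}"
    and delta0: "0 < \<delta> 0"
    and mu: "0 < \<mu>1" "\<mu>1 < \<mu>2" "\<mu>2 < 1"
    and cs: "0 < c1" "c1 < c2" "c2 < 1" "1 < c3"
    and d_feas: "\<And>k. norm (d k) \<le> \<delta> k"
    and x_upd: "\<And>k. x (Suc k) =
          (if (phi (x k) - phi (x k + d k)) /
              (tr_model phi (B k) (x k) 0 - tr_model phi (B k) (x k) (d k)) < \<mu>1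
           then x k else x k + d k)"
    and delta_upd: "\<And>k. \<delta> (Suc k) =
          (let r = (phi (x k) - phi (x k + d k)) /
              (tr_model phi (B k) (x k) 0 - tr_model phi (B k) (x k) (d k))
           in if r < \<mu>1 then c1 * \<delta> k else if r < \<mu>2 then c2 * \<delta> k else c3 * \<delta> k)"
    and M_pos: "0 < M"
    and B_bdd: "\<And>k. onorm (\<lambda>v. B k *v v) \<le> M"
    and beta: "0 < \<beta>"
    and decrease: "\<And>k. tr_model phi (B k) (x k) 0 - tr_model phi (B k) (x k) (d k)
        \<ge> \<beta> * norm (grad phi (x k)) *
           (let nB = onorm (\<lambda>v. B k *v v)
            in if nB = 0 then \<delta> k else min (\<delta> k) (norm (grad phi (x k)) / nB))"
begin

definition model_decrease :: "nat \<Rightarrow> real" where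
  "model_decrease k = tr_model phi (B k) (x k) 0 - tr_model phi (B k) (x k) (d k)"

text \<open>If the model decrease vanishes, division by zero makes the ratio \<open>0 < \<mu>1\<close>,
  so the step is rejected.\<close>

definition ratio :: "nat \<Rightarrow> real" where
  "ratio k = (phi (x k) - phi (x k + d k)) / model_decrease k"

lemma model_decrease_eq:
  "model_decrease k = - (grad phi (x k) \<bullet> d k) - 1 / 2 * (d k \<bullet> (B k *v d k))"
  by (simp add: model_decrease_def tr_model_def)

lemma radius_pos: "0 < \<delta> k"
proof (induction k)
  case (Suc k)
  then show ?case
    using cs by (auto simp: delta_upd Let_def)
qed (rule delta0)

lemma radius_step_ge: "c1 * \<delta> k \<le> \<delta> (Suc k)"
  using cs radius_pos[of k] by (auto simp: delta_upd Let_def intro: mult_right_mono)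

lemma model_decrease_nonneg: "0 \<le> model_decrease k"
proof -
  have "0 \<le> onorm (\<lambda>v. B k *v v)"
    by (rule onorm_pos_le) simp
  then have "0 \<le> \<beta> * norm (grad phi (x k)) *
      (let nB = onorm (\<lambda>v. B k *v v) in if nB = 0 then \<delta> k else min (\<delta> k) (norm (grad phi (x k)) / nB))"
    using beta radius_pos[of k] by (simp add: Let_def)
  then show ?thesis
    using decrease[of k] by (simp add: model_decrease_def)
qed

lemma successful_step:
  assumes "\<mu>1 \<le> ratio k"
  shows "x (Suc k) = x k + d k" and "0 < model_decrease k"
    and "phi (x (Suc k)) \<le> phi (x k) - \<mu>1 * model_decrease k"
proof -
  show step: "x (Suc k) = x k + d k"
    using assms x_upd[of k] by (simp add: ratio_def model_decrease_def)
  have "model_decrease k \<noteq> 0"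
    using assms mu(1) by (auto simp: ratio_def)
  then show pos: "0 < model_decrease k"
    using model_decrease_nonneg[of k] by simp
  show "phi (x (Suc k)) \<le> phi (x k) - \<mu>1 * model_decrease k"
    using assms pos step by (simp add: ratio_def pos_le_divide_eq)
qed

lemma unsuccessful_step:
  assumes "ratio k < \<mu>1"
  shows "x (Suc k) = x k" and "\<delta> (Suc k) = c1 * \<delta> k"
  using assms x_upd[of k] delta_upd[of k] by (simp_all add: ratio_def model_decrease_def)

lemma very_successful_step:
  assumes "\<mu>2 \<le> ratio k"
  shows "\<delta> (Suc k) = c3 * \<delta> k"
  using assms mu delta_upd[of k] by (simp add: ratio_def model_decrease_def)

lemma decseq_phi_iterates: "decseq (\<lambda>k. phi (x k))"
proof -
  have "phi (x (Suc k)) \<le> phi (x k)" for k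
  proof (cases "ratio k < \<mu>1")
    case False
    then show ?thesis
      using successful_step(2,3)[of k] mult_pos_pos[OF mu(1), of "model_decrease k"] by linarith
  qed (simp add: unsuccessful_step)
  then show ?thesis
    by (simp add: decseq_Suc_iff)
qed

lemma iterates_bounded: "bounded (range x)"
  using decseqD[OF decseq_phi_iterates, of 0]
  by (intro bounded_subset[OF level_bounded]) auto

lemma model_decrease_ge:
  assumes "0 < \<epsilon>" "\<epsilon> < norm (grad phi (x k))"
  shows "\<beta> * \<epsilon> * min (\<delta> k) (\<epsilon> / M) \<le> model_decrease k"
proof -
  let ?G = "norm (grad phi (x k))"
  let ?nB = "onorm (\<lambda>v. B k *v v)"
  have "min (\<delta> k) (\<epsilon> / M) \<le> (if ?nB = 0 then \<delta> k else min (\<delta> k) (?G / ?nB))"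
  proof (cases "?nB = 0")
    case False
    then have "0 < ?nB"
      using onorm_pos_le[of "\<lambda>v. B k *v v"] by simp
    then have "\<epsilon> / M \<le> ?G / ?nB"
      using B_bdd[of k] assms by (intro frac_le) auto
    with False show ?thesis
      by (simp add: min.coboundedI2)
  qed simp
  then have "\<beta> * \<epsilon> * min (\<delta> k) (\<epsilon> / M) \<le> \<beta> * ?G * (if ?nB = 0 then \<delta> k else min (\<delta> k) (?G / ?nB))"
    using assms beta radius_pos[of k] M_pos by (intro mult_mono) auto
  then show ?thesis
    using decrease[of k] by (simp add: model_decrease_def Let_def)
qed

lemma model_curvature_le: "\<bar>d k \<bullet> (B k *v d k)\<bar> \<le> M * (norm (d k))\<^sup>2"
proof -
  have "\<bar>d k \<bullet> (B k *v d k)\<bar> \<le> norm (d k) * norm (B k *v d k)"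
    by (rule Cauchy_Schwarz_ineq2)
  also have "\<dots> \<le> norm (d k) * (M * norm (d k))"
    using onorm[of "\<lambda>v. B k *v v" "d k"] mult_right_mono[OF B_bdd[of k] norm_ge_zero, of "d k"]
    by (intro mult_left_mono) auto
  finally show ?thesis
    by (simp add: power2_eq_square algebra_simps)
qed

text \<open>The only place where continuity of the gradient and boundedness of the iterates are used.\<close>

lemma very_successful_if_small_radius:
  assumes "0 < \<epsilon>"
  obtains \<Delta> where "0 < \<Delta>" "\<And>k. \<epsilon> < norm (grad phi (x k)) \<Longrightarrow> \<delta> k \<le> \<Delta> \<Longrightarrow> \<mu>2 \<le> ratio k"
proof -
  define \<omega> where "\<omega> = (1 - \<mu>2) * \<beta> * \<epsilon> / 2"
  have "0 < \<omega>"
    using mu beta assms by (simp add: \<omega>_def)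
  from uniform_first_order_approx[OF has_derivative_phi continuous_grad_phi iterates_bounded this]
  obtain \<Delta>1 where \<Delta>1: "0 < \<Delta>1" "\<And>y h. y \<in> range x \<Longrightarrow> norm h \<le> \<Delta>1 \<Longrightarrow>
      \<bar>phi (y + h) - phi y - grad phi y \<bullet> h\<bar> \<le> \<omega> * norm h"
    by blast
  define \<Delta> where "\<Delta> = min \<Delta>1 (min (\<epsilon> / M) (2 * \<omega> / M))"
  show ?thesis
  proof
    show "0 < \<Delta>"
      using \<Delta>1(1) \<open>0 < \<omega>\<close> assms M_pos by (simp add: \<Delta>_def)
    fix k assume G: "\<epsilon> < norm (grad phi (x k))" and small: "\<delta> k \<le> \<Delta>"
    have nd: "norm (d k) \<le> \<Delta>"
      using d_feas[of k] small by linarith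
    have taylor: "\<bar>phi (x k + d k) - phi (x k) - grad phi (x k) \<bullet> d k\<bar> \<le> \<omega> * norm (d k)"
      using \<Delta>1(2)[of "x k" "d k"] nd by (simp add: \<Delta>_def)
    have "M * norm (d k) \<le> 2 * \<omega>"
      using nd M_pos by (simp add: \<Delta>_def pos_le_divide_eq mult.commute)
    then have "M * (norm (d k))\<^sup>2 \<le> 2 * \<omega> * norm (d k)"
      by (simp add: power2_eq_square mult_right_mono flip: mult.assoc)
    then have quad: "\<bar>1 / 2 * (d k \<bullet> (B k *v d k))\<bar> \<le> \<omega> * norm (d k)"
      using model_curvature_le[of k] by simp
    have pred: "\<beta> * \<epsilon> * \<delta> k \<le> model_decrease k"
      using model_decrease_ge[OF assms G] small by (simp add: \<Delta>_def min_def split: if_splits)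
    have "model_decrease k - (phi (x k) - phi (x k + d k)) \<le> 2 * \<omega> * norm (d k)"
      using taylor quad unfolding model_decrease_eq by (simp add: abs_le_iff)
    also have "\<dots> \<le> 2 * \<omega> * \<delta> k"
      using d_feas[of k] \<open>0 < \<omega>\<close> by simp
    also have "\<dots> \<le> (1 - \<mu>2) * model_decrease k"
      using pred mu by (simp add: \<omega>_def mult_left_mono)
    finally have "\<mu>2 * model_decrease k \<le> phi (x k) - phi (x k + d k)"
      by (simp add: algebra_simps)
    moreover have "0 < model_decrease k"
      using pred beta assms radius_pos[of k] by (smt (verit) mult_pos_pos)
    ultimately show "\<mu>2 \<le> ratio k"
      by (simp add: ratio_def pos_le_divide_eq)
  qed
qed

lemma radius_bounded_below:
  assumes "0 < \<epsilon>" "\<And>k. N \<le> k \<Longrightarrow> \<epsilon> < norm (grad phi (x k))"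
  obtains \<eta> where "0 < \<eta>" "\<And>k. N \<le> k \<Longrightarrow> \<eta> \<le> \<delta> k"
proof -
  obtain \<Delta> where \<Delta>: "0 < \<Delta>" "\<And>k. \<epsilon> < norm (grad phi (x k)) \<Longrightarrow> \<delta> k \<le> \<Delta> \<Longrightarrow> \<mu>2 \<le> ratio k"
    using very_successful_if_small_radius[OF assms(1)] by blast
  define \<eta> where "\<eta> = min (\<delta> N) (c1 * \<Delta>)"
  have "\<eta> \<le> \<delta> k" if "N \<le> k" for k
    using that
  proof (induction k rule: dec_induct)
    case (step k)
    show ?case
    proof (cases "\<delta> k \<le> \<Delta>")
      case True
      then have "\<delta> (Suc k) = c3 * \<delta> k"
        using very_successful_step \<Delta>(2) assms(2) step.hyps(1) by blast
      then show ?thesis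
        using step.IH cs(4) radius_pos[of k] by (smt (verit) mult_le_cancel_right1)
    next
      case False
      then have "\<eta> \<le> c1 * \<delta> k"
        using cs(1) by (simp add: \<eta>_def min.coboundedI2)
      then show ?thesis
        using radius_step_ge[of k] by linarith
    qed
  qed (simp add: \<eta>_def)
  moreover have "0 < \<eta>"
    using radius_pos[of N] cs(1) \<Delta>(1) by (simp add: \<eta>_def)
  ultimately show ?thesis
    using that by blast
qed

lemma successful_steps_unbounded:
  assumes "0 < \<epsilon>" "\<And>k. N \<le> k \<Longrightarrow> \<epsilon> < norm (grad phi (x k))"
  shows "\<exists>j\<ge>k. \<mu>1 \<le> ratio j"
proof (rule ccontr)
  assume "\<not> ?thesis"
  then have fail: "\<And>j. k \<le> j \<Longrightarrow> ratio j < \<mu>1"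
    by force
  obtain \<eta> where \<eta>: "0 < \<eta>" "\<And>j. N \<le> j \<Longrightarrow> \<eta> \<le> \<delta> j"
    using radius_bounded_below[OF assms] by blast
  define K where "K = max k N"
  have geometric: "\<delta> (K + i) = c1 ^ i * \<delta> K" for i
    by (induction i) (simp_all add: unsuccessful_step fail K_def)
  obtain i where "c1 ^ i < \<eta> / \<delta> K"
    using real_arch_pow_inv[of "\<eta> / \<delta> K" c1] \<eta>(1) radius_pos[of K] cs by auto
  then have "\<delta> (K + i) < \<eta>"
    using geometric radius_pos[of K] by (simp add: pos_less_divide_eq)
  moreover have "N \<le> K + i"
    by (simp add: K_def)
  ultimately show False
    using \<eta>(2) by force
qed

lemma successful_step_gain:
  assumes "0 < \<epsilon>" "\<epsilon> < norm (grad phi (x k))" "\<eta> \<le> \<delta> k" "\<mu>1 \<le> ratio k"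
  shows "phi (x (Suc k)) \<le> phi (x k) - \<mu>1 * (\<beta> * \<epsilon> * min \<eta> (\<epsilon> / M))"
proof -
  have "\<beta> * \<epsilon> * min \<eta> (\<epsilon> / M) \<le> \<beta> * \<epsilon> * min (\<delta> k) (\<epsilon> / M)"
    using assms(1,3) beta by (intro mult_left_mono) auto
  also have "\<dots> \<le> model_decrease k"
    by (rule model_decrease_ge[OF assms(1,2)])
  finally have "\<mu>1 * (\<beta> * \<epsilon> * min \<eta> (\<epsilon> / M)) \<le> \<mu>1 * model_decrease k"
    using mu(1) by (simp add: mult_left_mono)
  with successful_step(3)[OF assms(4)] show ?thesis
    by linarith
qed

lemma grad_not_eventually_bounded_away:
  assumes "0 < \<epsilon>"
  shows "\<not> (\<forall>\<^sub>F k in sequentially. \<epsilon> < norm (grad phi (x k)))"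
proof
  assume "\<forall>\<^sub>F k in sequentially. \<epsilon> < norm (grad phi (x k))"
  then obtain N where N: "\<And>k. N \<le> k \<Longrightarrow> \<epsilon> < norm (grad phi (x k))"
    by (auto simp: eventually_sequentially)
  obtain \<eta> where \<eta>: "0 < \<eta>" "\<And>k. N \<le> k \<Longrightarrow> \<eta> \<le> \<delta> k"
    using radius_bounded_below[OF assms N] by blast
  define p where "p = \<mu>1 * (\<beta> * \<epsilon> * min \<eta> (\<epsilon> / M))"
  have "0 < p"
    using mu(1) beta assms \<eta>(1) M_pos by (simp add: p_def)
  have descent: "\<exists>k\<ge>N. phi (x k) \<le> phi (x N) - real m * p" for m
  proof (induction m)
    case (Suc m)
    then obtain k where k: "N \<le> k" "phi (x k) \<le> phi (x N) - real m * p"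
      by blast
    obtain j where j: "k \<le> j" "\<mu>1 \<le> ratio j"
      using successful_steps_unbounded[OF assms N] by blast
    have "phi (x (Suc j)) \<le> phi (x j) - p"
      unfolding p_def using successful_step_gain assms N \<eta>(2) j k(1) by simp
    moreover have "phi (x j) \<le> phi (x k)"
      using decseqD[OF decseq_phi_iterates j(1)] .
    ultimately show ?case
      using k j by (intro exI[of _ "Suc j"]) (auto simp: algebra_simps)
  qed auto
  obtain lb where lb: "\<And>y. lb \<le> phi y"
    using phi_bdd_below by (auto simp: bdd_below_def)
  obtain m where "phi (x N) - lb < real m * p"
    using ex_less_of_nat_mult[OF \<open>0 < p\<close>] by blast
  moreover obtain k where "phi (x k) \<le> phi (x N) - real m * p"
    using descent by blast
  ultimately show False
    using lb[of "x k"] by linarith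
qed

theorem liminf_norm_grad_eq_0:
  "Liminf sequentially (\<lambda>k. ereal (norm (grad phi (x k)))) = 0"
proof (rule ccontr)
  assume "Liminf sequentially (\<lambda>k. ereal (norm (grad phi (x k)))) \<noteq> 0"
  moreover have "0 \<le> Liminf sequentially (\<lambda>k. ereal (norm (grad phi (x k))))"
    by (rule Liminf_bounded) simp
  ultimately obtain \<epsilon> where "0 < ereal \<epsilon>" "ereal \<epsilon> < Liminf sequentially (\<lambda>k. ereal (norm (grad phi (x k))))"
    using ereal_dense2 by (metis order_le_less)
  then show False
    using grad_not_eventually_bounded_away less_LiminfD by fastforce
qed

end

section \<open>Proximal map and Moreau envelope of a weakly convex function\<close>

lemma norm_midpoint_diff_squared:
  fixes u v z :: "'a::real_inner"
  shows "(norm (midpoint u v - z))\<^sup>2 = (norm (u - z))\<^sup>2 / 2 + (norm (v - z))\<^sup>2 / 2 - (norm (u - v))\<^sup>2 / 4"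
  unfolding midpoint_def power2_norm_eq_inner
  by (simp add: inner_diff_left inner_diff_right inner_add_left inner_add_right inner_commute field_simps)

lemma Cauchy_minimizing_sequence:
  fixes F :: "'a::real_normed_vector \<Rightarrow> real"
  assumes mid: "\<And>a b. a \<in> D \<Longrightarrow> b \<in> D \<Longrightarrow>
      midpoint a b \<in> D \<and> F (midpoint a b) \<le> F a / 2 + F b / 2 - \<kappa> / 8 * (norm (a - b))\<^sup>2"
    and "0 < \<kappa>" and inf: "\<And>y. y \<in> D \<Longrightarrow> m \<le> F y"
    and u: "\<And>j. u j \<in> D" "\<And>j. F (u j) \<le> m + e j" and "e \<longlonglongrightarrow> 0"
  shows "Cauchy u"
proof (rule CauchyI)
  have sq: "(norm (u i - u j))\<^sup>2 \<le> 4 / \<kappa> * (e i + e j)" for i j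
  proof -
    have "m \<le> F (midpoint (u i) (u j))"
      using mid[OF u(1) u(1)] inf by blast
    also have "\<dots> \<le> m + e i / 2 + e j / 2 - \<kappa> / 8 * (norm (u i - u j))\<^sup>2"
      using mid[OF u(1) u(1), of i j] u(2)[of i] u(2)[of j] by linarith
    finally show ?thesis
      using \<open>0 < \<kappa>\<close> by (simp add: field_simps)
  qed
  fix r :: real assume "0 < r"
  then have "0 < \<kappa> * r\<^sup>2 / 8"
    using \<open>0 < \<kappa>\<close> by simp
  from LIMSEQ_D[OF \<open>e \<longlonglongrightarrow> 0\<close> this] obtain N where N: "\<And>j. N \<le> j \<Longrightarrow> \<bar>e j\<bar> < \<kappa> * r\<^sup>2 / 8"
    by auto
  have "norm (u i - u j) < r" if "N \<le> i" "N \<le> j" for i j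
  proof -
    have "4 / \<kappa> * (e i + e j) < 4 / \<kappa> * (\<kappa> * r\<^sup>2 / 4)"
      using N[OF that(1)] N[OF that(2)] \<open>0 < \<kappa>\<close> by (intro mult_strict_left_mono) auto
    then have "(norm (u i - u j))\<^sup>2 < r\<^sup>2"
      using sq[of i j] \<open>0 < \<kappa>\<close> by simp
    then show ?thesis
      using \<open>0 < r\<close> by (simp add: power_less_imp_less_base)
  qed
  then show "\<exists>N. \<forall>i\<ge>N. \<forall>j\<ge>N. norm (u i - u j) < r"
    by blast
qed

lemma lsc_fun_le_limit:
  fixes g :: "real^'n \<Rightarrow> ereal"
  assumes "lsc_fun g" "u \<longlonglongrightarrow> p" "\<And>j. g (u j) \<le> ereal (c j)" "c \<longlonglongrightarrow> l"
  shows "g p \<le> ereal l"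
proof (rule ccontr)
  assume "\<not> g p \<le> ereal l"
  then have "ereal l < g p"
    by simp
  from ereal_dense2[OF this] obtain c0 where "ereal l < ereal c0" "ereal c0 < g p"
    by blast
  then have c0: "l < c0" "ereal c0 < g p"
    by simp_all
  have "g p \<le> Liminf (at p) g"
    using assms(1) by (simp add: lsc_fun_def)
  with c0(2) have "ereal c0 < Liminf (at p) g"
    by (rule less_le_trans)
  then have "\<forall>\<^sub>F y in nhds p. ereal c0 < g y"
    unfolding eventually_nhds_conv_at using c0(2) less_LiminfD by blast
  then have "\<forall>\<^sub>F j in sequentially. ereal c0 < g (u j)"
    using assms(2) by (rule eventually_compose_filterlim)
  moreover have "\<forall>\<^sub>F j in sequentially. c j < c0"
    using assms(4) c0(1) by (rule order_tendstoD)
  ultimately have "\<forall>\<^sub>F j in sequentially. ereal c0 < g (u j) \<and> c j < c0"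
    by (rule eventually_conj)
  then obtain N where N: "ereal c0 < g (u N)" "c N < c0"
    by (auto simp: eventually_sequentially)
  have "ereal c0 < ereal (c N)"
    using N(1) assms(3)[of N] by (rule less_le_trans)
  with N(2) show False
    by simp
qed

locale composite_problem =
  fixes f :: "real^'n \<Rightarrow> real" and g :: "real^'n \<Rightarrow> ereal" and L \<rho> \<gamma> :: real
  assumes f_C2: "C2plus f"
    and f_lip: "lipschitz_grad L f"
    and g_proper: "proper_fun g" and g_lsc: "lsc_fun g" and g_wc: "weakly_convex \<rho> g"
    and argmin_ne: "\<exists>z. \<forall>y. ereal (f z) + g z \<le> ereal (f y) + g y"
    and gamma_pos: "0 < \<gamma>" and gamma_L: "\<gamma> * L < 1" and gamma_rho: "\<gamma> * \<rho> < 1"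
begin

lemma has_derivative_f: "(f has_derivative (\<lambda>h. grad f x \<bullet> h)) (at x)"
  using f_C2 by (simp add: C2plus_def has_derivative_grad)

lemma has_derivative_grad_f: "(grad f has_derivative (\<lambda>h. hess f x *v h)) (at x)"
  using f_C2 by (simp add: C2plus_def has_derivative_hess)

lemma continuous_on_grad_f: "continuous_on UNIV (grad f)"
  using has_derivative_grad_f has_derivative_continuous continuous_at_imp_continuous_on by blast

lemma f_descent: "f u \<le> f x + grad f x \<bullet> (u - x) + L / 2 * (norm (u - x))\<^sup>2"
  by (rule descent_lemma[OF has_derivative_f f_lip])

text \<open>Only meaningful on the domain of \<open>g\<close>: \<open>real_of_ereal\<close> sends \<open>\<infinity>\<close> to \<open>0\<close>.\<close>

definition g_real :: "real^'n \<Rightarrow> real" where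
  "g_real u = real_of_ereal (g u)"

lemma g_eq_g_real: "g u \<noteq> \<infinity> \<Longrightarrow> g u = ereal (g_real u)"
  using g_proper by (cases "g u") (auto simp: g_real_def proper_fun_def)

lemma dom_g_nonempty: "\<exists>u. g u \<noteq> \<infinity>"
  using g_proper by (simp add: proper_fun_def)

lemma g_midpoint:
  assumes "g u \<noteq> \<infinity>" "g v \<noteq> \<infinity>"
  shows "g (midpoint u v) \<noteq> \<infinity>"
    and "g_real (midpoint u v) \<le> g_real u / 2 + g_real v / 2 + \<rho> / 8 * (norm (u - v))\<^sup>2"
proof -
  have "g (midpoint u v) + ereal (\<rho> / 2 * (norm (midpoint u v))\<^sup>2)
      \<le> ereal (1 / 2) * (g u + ereal (\<rho> / 2 * (norm u)\<^sup>2)) + ereal (1 - 1 / 2) * (g v + ereal (\<rho> / 2 * (norm v)\<^sup>2))"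
    using g_wc[unfolded weakly_convex_def convex_efun_def, rule_format, of "1 / 2" u v]
    by (simp add: midpoint_def scaleR_right_distrib)
  also have "\<dots> = ereal ((g_real u + \<rho> / 2 * (norm u)\<^sup>2) / 2 + (g_real v + \<rho> / 2 * (norm v)\<^sup>2) / 2)"
    using g_eq_g_real[OF assms(1)] g_eq_g_real[OF assms(2)] by simp
  finally have le: "g (midpoint u v) + ereal (\<rho> / 2 * (norm (midpoint u v))\<^sup>2)
      \<le> ereal ((g_real u + \<rho> / 2 * (norm u)\<^sup>2) / 2 + (g_real v + \<rho> / 2 * (norm v)\<^sup>2) / 2)" .
  then show fin: "g (midpoint u v) \<noteq> \<infinity>"
    by auto
  have "g_real (midpoint u v) + \<rho> / 2 * (norm (midpoint u v))\<^sup>2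
      \<le> (g_real u + \<rho> / 2 * (norm u)\<^sup>2) / 2 + (g_real v + \<rho> / 2 * (norm v)\<^sup>2) / 2"
    using le unfolding g_eq_g_real[OF fin] by simp
  moreover have "\<rho> / 2 * (norm (midpoint u v))\<^sup>2
      = \<rho> / 4 * (norm u)\<^sup>2 + \<rho> / 4 * (norm v)\<^sup>2 - \<rho> / 8 * (norm (u - v))\<^sup>2"
    using norm_midpoint_diff_squared[of u v 0] by simp (simp add: algebra_simps)
  ultimately show "g_real (midpoint u v) \<le> g_real u / 2 + g_real v / 2 + \<rho> / 8 * (norm (u - v))\<^sup>2"
    by argo
qed

lemma objective_lower_bound:
  obtains m where "\<And>y. g y \<noteq> \<infinity> \<Longrightarrow> m \<le> f y + g_real y"
proof -
  obtain z where z: "\<And>y. ereal (f z) + g z \<le> ereal (f y) + g y"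
    using argmin_ne by blast
  have "g y \<noteq> \<infinity> \<Longrightarrow> f z + g_real z \<le> f y + g_real y" for y
    using z[of y] g_eq_g_real[of y] g_eq_g_real[of z] by (cases "g z") auto
  then show ?thesis
    using that by blast
qed

definition prox_obj :: "real^'n \<Rightarrow> real^'n \<Rightarrow> real" where
  "prox_obj z u = g_real u + (norm (u - z))\<^sup>2 / (2 * \<gamma>)"

definition prox_modulus :: real where
  "prox_modulus = 1 / \<gamma> - \<rho>"

lemma prox_modulus_pos: "0 < prox_modulus"
  using gamma_rho gamma_pos by (simp add: prox_modulus_def field_simps)

lemma prox_obj_midpoint:
  assumes "g u \<noteq> \<infinity>" "g v \<noteq> \<infinity>"
  shows "prox_obj z (midpoint u v) \<le> prox_obj z u / 2 + prox_obj z v / 2 - prox_modulus / 8 * (norm (u - v))\<^sup>2"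
proof -
  have "(norm (midpoint u v - z))\<^sup>2 / (2 * \<gamma>)
      = (norm (u - z))\<^sup>2 / (2 * \<gamma>) / 2 + (norm (v - z))\<^sup>2 / (2 * \<gamma>) / 2 - (norm (u - v))\<^sup>2 / (8 * \<gamma>)"
    using gamma_pos by (simp add: norm_midpoint_diff_squared field_simps)
  moreover have "prox_modulus / 8 * (norm (u - v))\<^sup>2 = (norm (u - v))\<^sup>2 / (8 * \<gamma>) - \<rho> / 8 * (norm (u - v))\<^sup>2"
    using gamma_pos by (simp add: prox_modulus_def field_simps)
  ultimately show ?thesis
    using g_midpoint(2)[OF assms] unfolding prox_obj_def by argo
qed

lemma prox_obj_shift:
  "prox_obj z' u - prox_obj z u = ((z - u) \<bullet> (z' - z)) / \<gamma> + (norm (z' - z))\<^sup>2 / (2 * \<gamma>)"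
  using gamma_pos unfolding prox_obj_def power2_norm_eq_inner
  by (simp add: inner_diff_left inner_diff_right inner_commute field_simps)

text \<open>Prox-boundedness of \<open>g\<close> comes from the minimizer of \<open>f + g\<close> together with the
  quadratic upper bound on \<open>f\<close>; no convex minorant of \<open>g\<close> is needed.\<close>

lemma prox_obj_bdd_below: "bdd_below (prox_obj z ` {u. g u \<noteq> \<infinity>})"
proof -
  obtain m where m: "\<And>y. g y \<noteq> \<infinity> \<Longrightarrow> m \<le> f y + g_real y"
    using objective_lower_bound by blast
  define a where "a = 1 / (2 * \<gamma>) - L / 2"
  have "0 < a"
    using gamma_L gamma_pos by (simp add: a_def field_simps)
  have "m - f z - (norm (grad f z))\<^sup>2 / (4 * a) \<le> prox_obj z u" if "g u \<noteq> \<infinity>" for u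
  proof -
    let ?t = "norm (u - z)" and ?b = "norm (grad f z)"
    have "0 \<le> (2 * a * ?t - ?b)\<^sup>2"
      by simp
    then have "- ?b\<^sup>2 / (4 * a) \<le> a * ?t\<^sup>2 - ?b * ?t"
      using \<open>0 < a\<close> by (simp add: field_simps power2_eq_square)
    moreover have "grad f z \<bullet> (u - z) \<le> ?b * ?t"
      by (rule norm_cauchy_schwarz)
    moreover have "m \<le> f z + grad f z \<bullet> (u - z) + L / 2 * ?t\<^sup>2 + g_real u"
      using m[OF that] f_descent[of u z] by linarith
    ultimately show ?thesis
      by (simp add: prox_obj_def a_def algebra_simps)
  qed
  then show ?thesis
    by (auto simp: bdd_below_def)
qed

definition is_prox :: "real^'n \<Rightarrow> real^'n \<Rightarrow> bool" where
  "is_prox z p \<longleftrightarrow> g p \<noteq> \<infinity> \<and> (\<forall>u. g u \<noteq> \<infinity> \<longrightarrow> prox_obj z p \<le> prox_obj z u)"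

lemma is_prox_growth:
  assumes "is_prox z p" "g u \<noteq> \<infinity>"
  shows "prox_obj z p + prox_modulus / 4 * (norm (u - p))\<^sup>2 \<le> prox_obj z u"
proof -
  have "g p \<noteq> \<infinity>"
    using assms(1) by (simp add: is_prox_def)
  then have "prox_obj z p \<le> prox_obj z (midpoint u p)"
    using assms g_midpoint(1) by (simp add: is_prox_def)
  also have "\<dots> \<le> prox_obj z u / 2 + prox_obj z p / 2 - prox_modulus / 8 * (norm (u - p))\<^sup>2"
    by (rule prox_obj_midpoint[OF assms(2) \<open>g p \<noteq> \<infinity>\<close>])
  finally show ?thesis
    by argo
qed

lemma is_prox_unique:
  assumes "is_prox z p" "is_prox z q"
  shows "p = q"
proof -
  have "prox_obj z p + prox_modulus / 4 * (norm (q - p))\<^sup>2 \<le> prox_obj z q"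
    "prox_obj z q + prox_modulus / 4 * (norm (p - q))\<^sup>2 \<le> prox_obj z p"
    using is_prox_growth assms by (auto simp: is_prox_def)
  then have "prox_modulus / 4 * (norm (q - p))\<^sup>2 \<le> 0"
    by (simp add: norm_minus_commute)
  then show ?thesis
    using prox_modulus_pos by (simp add: mult_le_0_iff)
qed

lemma is_prox_exists: "\<exists>p. is_prox z p"
proof -
  let ?D = "{u. g u \<noteq> \<infinity>}"
  define m where "m = Inf (prox_obj z ` ?D)"
  have m_le: "m \<le> prox_obj z u" if "g u \<noteq> \<infinity>" for u
    unfolding m_def using prox_obj_bdd_below that by (auto intro: cInf_lower)
  have "\<exists>u. g u \<noteq> \<infinity> \<and> prox_obj z u < m + inverse (real (Suc j))" for j
    using cInf_lessD[of "prox_obj z ` ?D" "m + inverse (real (Suc j))"] dom_g_nonempty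
    by (auto simp: m_def)
  then obtain u where u: "\<And>j. g (u j) \<noteq> \<infinity>" "\<And>j. prox_obj z (u j) < m + inverse (real (Suc j))"
    by metis
  have "Cauchy u"
  proof (rule Cauchy_minimizing_sequence[of ?D "prox_obj z" prox_modulus m])
    show "midpoint a b \<in> ?D \<and> prox_obj z (midpoint a b)
        \<le> prox_obj z a / 2 + prox_obj z b / 2 - prox_modulus / 8 * (norm (a - b))\<^sup>2"
      if "a \<in> ?D" "b \<in> ?D" for a b
      using that g_midpoint(1) prox_obj_midpoint by auto
  qed (use prox_modulus_pos m_le u LIMSEQ_inverse_real_of_nat in \<open>auto intro: less_imp_le\<close>)
  then obtain p where p: "u \<longlonglongrightarrow> p"
    by (auto simp: Cauchy_convergent_iff convergent_def)
  have "g p \<le> ereal (m - (norm (p - z))\<^sup>2 / (2 * \<gamma>))"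
  proof (rule lsc_fun_le_limit[OF g_lsc p])
    show "g (u j) \<le> ereal (m + inverse (real (Suc j)) - (norm (u j - z))\<^sup>2 / (2 * \<gamma>))" for j
      using u[of j] g_eq_g_real[OF u(1)] by (simp add: prox_obj_def)
    have "(\<lambda>j. m + inverse (real (Suc j)) - (norm (u j - z))\<^sup>2 / (2 * \<gamma>))
        \<longlonglongrightarrow> m + 0 - (norm (p - z))\<^sup>2 / (2 * \<gamma>)"
      using gamma_pos by (intro tendsto_intros LIMSEQ_inverse_real_of_nat p) simp
    then show "(\<lambda>j. m + inverse (real (Suc j)) - (norm (u j - z))\<^sup>2 / (2 * \<gamma>))
        \<longlonglongrightarrow> m - (norm (p - z))\<^sup>2 / (2 * \<gamma>)"
      by simp
  qed
  moreover from this have fin: "g p \<noteq> \<infinity>"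
    by auto
  ultimately have "prox_obj z p \<le> m"
    using g_eq_g_real[of p] by (simp add: prox_obj_def)
  then show ?thesis
    using fin m_le by (force simp: is_prox_def)
qed

lemma is_prox_iff:
  "is_prox z p \<longleftrightarrow>
    (\<forall>w. g p + ereal ((norm (p - z))\<^sup>2 / (2 * \<gamma>)) \<le> g w + ereal ((norm (w - z))\<^sup>2 / (2 * \<gamma>)))"
    (is "_ \<longleftrightarrow> (\<forall>w. ?le w)")
proof
  assume p: "is_prox z p"
  show "\<forall>w. ?le w"
  proof
    fix w
    show "?le w"
    proof (cases "g w = \<infinity>")
      case False
      then show ?thesis
        using p g_eq_g_real[OF False] g_eq_g_real[of p] by (simp add: is_prox_def prox_obj_def)
    qed simp
  qed
next
  assume le: "\<forall>w. ?le w"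
  obtain w where w: "g w \<noteq> \<infinity>"
    using dom_g_nonempty by blast
  have fin: "g p \<noteq> \<infinity>"
    using le[rule_format, of w] g_eq_g_real[OF w] by auto
  have "prox_obj z p \<le> prox_obj z u" if "g u \<noteq> \<infinity>" for u
    using le[rule_format, of u] g_eq_g_real[OF that] g_eq_g_real[OF fin] by (simp add: prox_obj_def)
  with fin show "is_prox z p"
    by (simp add: is_prox_def)
qed

lemma is_prox_prox: "is_prox z (prox \<gamma> g z)"
proof -
  have "\<exists>!p. is_prox z p"
    using is_prox_exists is_prox_unique by blast
  then show ?thesis
    unfolding prox_def is_prox_iff[symmetric] by (rule theI')
qed

lemma prox_dom: "g (prox \<gamma> g z) \<noteq> \<infinity>"
  using is_prox_prox by (simp add: is_prox_def)

definition prox_lip :: real where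
  "prox_lip = 2 / (\<gamma> * prox_modulus)"

lemma prox_lipschitz: "norm (prox \<gamma> g z - prox \<gamma> g z') \<le> prox_lip * norm (z - z')"
proof -
  let ?p = "prox \<gamma> g z" and ?q = "prox \<gamma> g z'"
  let ?d = "norm (?p - ?q)"
  have dom: "g ?p \<noteq> \<infinity>" "g ?q \<noteq> \<infinity>"
    by (rule prox_dom)+
  have "prox_obj z ?p + prox_modulus / 4 * ?d\<^sup>2 \<le> prox_obj z ?q"
    using is_prox_growth[OF is_prox_prox dom(2)] by (simp add: norm_minus_commute)
  moreover have "prox_obj z' ?q + prox_modulus / 4 * ?d\<^sup>2 \<le> prox_obj z' ?p"
    using is_prox_growth[OF is_prox_prox dom(1)] .
  moreover have "(prox_obj z' ?p - prox_obj z ?p) - (prox_obj z' ?q - prox_obj z ?q) = ((?q - ?p) \<bullet> (z' - z)) / \<gamma>"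
    unfolding prox_obj_shift by (simp add: inner_diff_left diff_divide_distrib)
  moreover have "((?q - ?p) \<bullet> (z' - z)) / \<gamma> \<le> ?d * norm (z - z') / \<gamma>"
    using gamma_pos norm_cauchy_schwarz[of "?q - ?p" "z' - z"]
    by (intro divide_right_mono) (auto simp: norm_minus_commute)
  ultimately have le: "?d * (prox_modulus / 2 * ?d) \<le> ?d * (norm (z - z') / \<gamma>)"
    by (simp add: power2_eq_square) argo
  have "prox_modulus / 2 * ?d \<le> norm (z - z') / \<gamma>"
  proof (cases "?d = 0")
    case True
    then show ?thesis
      using gamma_pos by simp
  next
    case False
    then have "0 < ?d"
      by simp
    with le show ?thesis
      by (rule mult_left_le_imp_le)
  qed
  then show ?thesis
    using prox_modulus_pos gamma_pos by (simp add: prox_lip_def field_simps)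
qed

definition moreau_env :: "real^'n \<Rightarrow> real" where
  "moreau_env z = prox_obj z (prox \<gamma> g z)"

lemma moreau_env_le_prox_obj: "g u \<noteq> \<infinity> \<Longrightarrow> moreau_env z \<le> prox_obj z u"
  using is_prox_prox unfolding moreau_env_def is_prox_def by blast

lemma moreau_env_shift_le:
  "moreau_env z' \<le> moreau_env z + ((z - prox \<gamma> g z) \<bullet> (z' - z)) / \<gamma> + (norm (z' - z))\<^sup>2 / (2 * \<gamma>)"
  using moreau_env_le_prox_obj[OF prox_dom, of z' z] prox_obj_shift[where z = z and z' = z' and u = "prox \<gamma> g z"]
  by (simp add: moreau_env_def)

lemma moreau_env_remainder:
  "\<bar>moreau_env z' - moreau_env z - ((1 / \<gamma>) *\<^sub>R (z - prox \<gamma> g z)) \<bullet> (z' - z)\<bar>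
    \<le> (1 / (2 * \<gamma>) + prox_lip / \<gamma>) * (norm (z' - z))\<^sup>2"
proof -
  let ?p = "prox \<gamma> g z" and ?q = "prox \<gamma> g z'"
  define r where "r = moreau_env z' - moreau_env z - ((z - ?p) \<bullet> (z' - z)) / \<gamma>"
  define N where "N = (norm (z' - z))\<^sup>2 / (2 * \<gamma>)"
  have upper: "r \<le> N"
    using moreau_env_shift_le[of z' z] by (simp add: r_def N_def)
  have "((z' - ?q) \<bullet> (z - z')) / \<gamma> + N = - (((z - ?q) \<bullet> (z' - z)) / \<gamma>) - N"
    using gamma_pos unfolding N_def power2_norm_eq_inner
    by (simp add: inner_diff_left inner_diff_right inner_commute field_simps)
  moreover have "moreau_env z \<le> moreau_env z' + ((z' - ?q) \<bullet> (z - z')) / \<gamma> + N"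
    using moreau_env_shift_le[of z z'] by (simp add: N_def norm_minus_commute)
  moreover have "((?p - ?q) \<bullet> (z' - z)) / \<gamma> = ((z - ?q) \<bullet> (z' - z)) / \<gamma> - ((z - ?p) \<bullet> (z' - z)) / \<gamma>"
    by (simp add: inner_diff_left diff_divide_distrib)
  ultimately have lower: "((?p - ?q) \<bullet> (z' - z)) / \<gamma> + N \<le> r"
    unfolding r_def by linarith
  have "- ((?p - ?q) \<bullet> (z' - z)) \<le> norm (?p - ?q) * norm (z' - z)"
    using norm_cauchy_schwarz[of "?q - ?p" "z' - z"] by (simp add: inner_diff_left norm_minus_commute)
  also have "\<dots> \<le> prox_lip * (norm (z' - z))\<^sup>2"
    using mult_right_mono[OF prox_lipschitz[of z z'] norm_ge_zero, of "z' - z"]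
    by (simp add: norm_minus_commute power2_eq_square mult.assoc)
  finally have "- (((?p - ?q) \<bullet> (z' - z)) / \<gamma>) \<le> prox_lip * (norm (z' - z))\<^sup>2 / \<gamma>"
    using divide_right_mono[OF _ less_imp_le[OF gamma_pos]] by fastforce
  moreover have "0 \<le> N" "0 \<le> prox_lip * (norm (z' - z))\<^sup>2 / \<gamma>"
    using gamma_pos prox_modulus_pos by (simp_all add: N_def prox_lip_def)
  moreover have "(1 / (2 * \<gamma>) + prox_lip / \<gamma>) * (norm (z' - z))\<^sup>2 = N + prox_lip * (norm (z' - z))\<^sup>2 / \<gamma>"
    by (simp add: N_def algebra_simps)
  ultimately show ?thesis
    using upper lower by (simp add: r_def abs_le_iff)
qed

lemma has_derivative_moreau_env:
  "(moreau_env has_derivative (\<lambda>h. ((1 / \<gamma>) *\<^sub>R (z - prox \<gamma> g z)) \<bullet> h)) (at z)"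
  by (rule has_derivative_of_quadratic_remainder[OF moreau_env_remainder])

end

section \<open>The forward-backward envelope\<close>

lemma completing_square:
  fixes u v x :: "'a::real_inner"
  assumes "0 < \<gamma>"
  shows "v \<bullet> (u - x) + (norm (u - x))\<^sup>2 / (2 * \<gamma>)
    = (norm (u - (x - \<gamma> *\<^sub>R v)))\<^sup>2 / (2 * \<gamma>) - \<gamma> / 2 * (norm v)\<^sup>2"
proof -
  have "(norm (u - (x - \<gamma> *\<^sub>R v)))\<^sup>2 = (norm (u - x))\<^sup>2 + 2 * \<gamma> * (v \<bullet> (u - x)) + \<gamma>\<^sup>2 * (norm v)\<^sup>2"
    unfolding power2_norm_eq_inner
    by (simp add: inner_diff_left inner_diff_right inner_commute algebra_simps power2_eq_square)
  then show ?thesis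
    using assms by (simp add: field_simps power2_eq_square)
qed

context composite_problem
begin

definition fb_step :: "real^'n \<Rightarrow> real^'n" where
  "fb_step x = prox \<gamma> g (x - \<gamma> *\<^sub>R grad f x)"

lemma fbe_eq_moreau_env:
  "fbe \<gamma> f g x = f x - \<gamma> / 2 * (norm (grad f x))\<^sup>2 + moreau_env (x - \<gamma> *\<^sub>R grad f x)"
proof -
  let ?z = "x - \<gamma> *\<^sub>R grad f x"
  let ?K = "f x - \<gamma> / 2 * (norm (grad f x))\<^sup>2"
  let ?p = "prox \<gamma> g ?z"
  have integrand: "ereal (f x + grad f x \<bullet> (u - x) + (norm (u - x))\<^sup>2 / (2 * \<gamma>)) + g u
      = ereal ?K + (g u + ereal ((norm (u - ?z))\<^sup>2 / (2 * \<gamma>)))" for u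
    using completing_square[OF gamma_pos, of "grad f x" u x] by (cases "g u") (simp_all add: add.assoc)
  have "g ?p \<noteq> \<infinity>"
    by (rule prox_dom)
  then have at_prox: "g ?p + ereal ((norm (?p - ?z))\<^sup>2 / (2 * \<gamma>)) = ereal (moreau_env ?z)"
    unfolding g_eq_g_real[OF \<open>g ?p \<noteq> \<infinity>\<close>] by (simp add: moreau_env_def prox_obj_def)
  have "(INF u. ereal ?K + (g u + ereal ((norm (u - ?z))\<^sup>2 / (2 * \<gamma>)))) = ereal ?K + ereal (moreau_env ?z)"
  proof (rule antisym)
    show "(INF u. ereal ?K + (g u + ereal ((norm (u - ?z))\<^sup>2 / (2 * \<gamma>)))) \<le> ereal ?K + ereal (moreau_env ?z)"
      unfolding at_prox[symmetric] by (rule INF_lower) simp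
    show "ereal ?K + ereal (moreau_env ?z) \<le> (INF u. ereal ?K + (g u + ereal ((norm (u - ?z))\<^sup>2 / (2 * \<gamma>))))"
      unfolding at_prox[symmetric]
      using is_prox_prox[of ?z] unfolding is_prox_iff by (intro INF_greatest add_left_mono) simp
  qed
  then show ?thesis
    unfolding fbe_def integrand by simp
qed

lemma fbe_eq_at_fb_step:
  "fbe \<gamma> f g x = f x + grad f x \<bullet> (fb_step x - x) + (norm (fb_step x - x))\<^sup>2 / (2 * \<gamma>) + g_real (fb_step x)"
  using completing_square[OF gamma_pos, of "grad f x" "fb_step x" x]
  by (simp add: fbe_eq_moreau_env moreau_env_def prox_obj_def fb_step_def)

lemma residual_eq: "residual \<gamma> f g x = (1 / \<gamma>) *\<^sub>R (x - fb_step x)"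
  by (simp add: residual_def fb_step_def)

lemma has_derivative_fbe:
  "(fbe \<gamma> f g has_derivative (\<lambda>h. (residual \<gamma> f g x - \<gamma> *\<^sub>R (residual \<gamma> f g x v* hess f x)) \<bullet> h)) (at x)"
proof -
  let ?H = "hess f x" and ?R = "residual \<gamma> f g x"
  let ?a = "(1 / \<gamma>) *\<^sub>R ((x - \<gamma> *\<^sub>R grad f x) - fb_step x)"
  have fbe: "fbe \<gamma> f g = (\<lambda>x. f x - \<gamma> / 2 * (grad f x \<bullet> grad f x) + moreau_env (x - \<gamma> *\<^sub>R grad f x))"
    by (rule ext) (simp add: fbe_eq_moreau_env power2_norm_eq_inner)
  have a_eq: "?a = ?R - grad f x"
    using gamma_pos by (simp add: residual_eq algebra_simps)
  have shift: "((\<lambda>x. x - \<gamma> *\<^sub>R grad f x) has_derivative (\<lambda>h. h - \<gamma> *\<^sub>R (?H *v h))) (at x)"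
    by (intro has_derivative_diff has_derivative_ident has_derivative_scaleR_right has_derivative_grad_f)
  have "((\<lambda>x. moreau_env (x - \<gamma> *\<^sub>R grad f x)) has_derivative (\<lambda>h. ?a \<bullet> (h - \<gamma> *\<^sub>R (?H *v h)))) (at x)"
    using has_derivative_compose[OF shift has_derivative_moreau_env] by (simp add: fb_step_def)
  then have "(fbe \<gamma> f g has_derivative (\<lambda>h. grad f x \<bullet> h
      - \<gamma> / 2 * (grad f x \<bullet> (?H *v h) + (?H *v h) \<bullet> grad f x) + ?a \<bullet> (h - \<gamma> *\<^sub>R (?H *v h)))) (at x)"
    unfolding fbe
    by (intro has_derivative_add has_derivative_diff has_derivative_f has_derivative_mult_right
        has_derivative_inner[OF has_derivative_grad_f has_derivative_grad_f])
  moreover have "grad f x \<bullet> h - \<gamma> / 2 * (grad f x \<bullet> (?H *v h) + (?H *v h) \<bullet> grad f x)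
      + ?a \<bullet> (h - \<gamma> *\<^sub>R (?H *v h)) = (?R - \<gamma> *\<^sub>R (?R v* ?H)) \<bullet> h" for h
    unfolding a_eq
    by (simp add: inner_diff_left inner_diff_right inner_commute[of h] inner_commute[of "?H *v h"]
        algebra_simps dot_lmul_matrix)
  ultimately show ?thesis
    by simp
qed

lemma grad_fbe: "grad (fbe \<gamma> f g) x = residual \<gamma> f g x - \<gamma> *\<^sub>R (residual \<gamma> f g x v* hess f x)"
  by (rule grad_eqI[OF has_derivative_fbe])

lemma continuous_on_grad_fbe: "continuous_on UNIV (grad (fbe \<gamma> f g))"
proof -
  have "prox_lip-lipschitz_on UNIV (prox \<gamma> g)"
    using prox_lipschitz prox_modulus_pos gamma_pos by (auto simp: lipschitz_on_def dist_norm prox_lip_def)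
  then have "continuous_on UNIV (prox \<gamma> g)"
    by (rule lipschitz_on_continuous_on)
  then have "continuous_on UNIV (\<lambda>x. prox \<gamma> g (x - \<gamma> *\<^sub>R grad f x))"
    by (rule continuous_on_compose2) (auto intro!: continuous_intros continuous_on_grad_f)
  then have "continuous_on UNIV (residual \<gamma> f g)"
    unfolding residual_def[abs_def] by (intro continuous_intros)
  moreover have "continuous_on UNIV (hess f)"
    using f_C2 by (simp add: C2plus_def)
  ultimately show ?thesis
    unfolding grad_fbe[abs_def] vector_matrix_mult_def by (intro continuous_intros)
qed

lemma objective_at_fb_step_le_fbe:
  "f (fb_step x) + g_real (fb_step x) + (1 / (2 * \<gamma>) - L / 2) * (norm (fb_step x - x))\<^sup>2 \<le> fbe \<gamma> f g x"
  using f_descent[of "fb_step x" x] unfolding fbe_eq_at_fb_step by (simp add: algebra_simps)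

lemma fb_step_dom: "g (fb_step x) \<noteq> \<infinity>"
  unfolding fb_step_def by (rule prox_dom)

lemma fbe_coefficient_pos: "0 < 1 / (2 * \<gamma>) - L / 2"
  using gamma_L gamma_pos by (simp add: field_simps)

lemma bdd_below_fbe: "bdd_below (range (fbe \<gamma> f g))"
proof -
  obtain m where m: "\<And>y. g y \<noteq> \<infinity> \<Longrightarrow> m \<le> f y + g_real y"
    using objective_lower_bound by blast
  have "m \<le> fbe \<gamma> f g x" for x
  proof -
    have "0 \<le> (1 / (2 * \<gamma>) - L / 2) * (norm (fb_step x - x))\<^sup>2"
      using fbe_coefficient_pos by simp
    then show ?thesis
      using m[OF fb_step_dom[of x]] objective_at_fb_step_le_fbe[of x] by linarith
  qed
  then show ?thesis
    by (auto simp: bdd_below_def)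
qed

lemma fbe_le_objective:
  assumes "g x \<noteq> \<infinity>"
  shows "fbe \<gamma> f g x \<le> f x + g_real x"
proof -
  have "moreau_env (x - \<gamma> *\<^sub>R grad f x) \<le> prox_obj (x - \<gamma> *\<^sub>R grad f x) x"
    using moreau_env_le_prox_obj[OF assms] .
  then show ?thesis
    using completing_square[OF gamma_pos, of "grad f x" x x]
    by (simp add: fbe_eq_moreau_env prox_obj_def)
qed

lemma bounded_fbe_level_set:
  assumes "bounded {y. ereal (f y) + g y \<le> ereal (f x0) + g x0}"
  shows "bounded {y. fbe \<gamma> f g y \<le> fbe \<gamma> f g x0}"
proof -
  have x0: "g x0 \<noteq> \<infinity>"
  proof
    assume "g x0 = \<infinity>"
    with assms show False
      by simp
  qed
  obtain a where a: "\<And>y. ereal (f y) + g y \<le> ereal (f x0) + g x0 \<Longrightarrow> norm y \<le> a"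
    using assms unfolding bounded_iff by blast
  obtain m where m: "\<And>y. g y \<noteq> \<infinity> \<Longrightarrow> m \<le> f y + g_real y"
    using objective_lower_bound by blast
  define c where "c = 1 / (2 * \<gamma>) - L / 2"
  define \<Phi> where "\<Phi> = f x0 + g_real x0"
  have "norm y \<le> a + sqrt ((\<Phi> - m) / c)" if y: "fbe \<gamma> f g y \<le> fbe \<gamma> f g x0" for y
  proof -
    let ?p = "fb_step y"
    have le: "f ?p + g_real ?p + c * (norm (?p - y))\<^sup>2 \<le> \<Phi>"
      using objective_at_fb_step_le_fbe[of y] y fbe_le_objective[OF x0] by (simp add: c_def \<Phi>_def)
    have "0 \<le> c * (norm (?p - y))\<^sup>2"
      using fbe_coefficient_pos by (simp add: c_def)
    with le have "ereal (f ?p) + g ?p \<le> ereal (f x0) + g x0"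
      using g_eq_g_real[OF fb_step_dom] g_eq_g_real[OF x0] by (simp add: \<Phi>_def)
    then have "norm ?p \<le> a"
      by (rule a)
    moreover have "norm (y - ?p) \<le> sqrt ((\<Phi> - m) / c)"
    proof (rule real_le_rsqrt)
      have "c * (norm (?p - y))\<^sup>2 \<le> \<Phi> - m"
        using le m[OF fb_step_dom[of y]] by linarith
      then show "(norm (y - ?p))\<^sup>2 \<le> (\<Phi> - m) / c"
        using fbe_coefficient_pos by (simp add: c_def field_simps norm_minus_commute)
    qed
    ultimately show ?thesis
      using norm_triangle_sub[of y ?p] by linarith
  qed
  then show ?thesis
    unfolding bounded_iff by blast
qed

end

theorem theoremA4:
  fixes f :: "real^'n \<Rightarrow> real" and g :: "real^'n \<Rightarrow> ereal"
    and L \<rho> \<gamma> \<mu>1 \<mu>2 c1 c2 c3 M \<beta> :: real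
    and x :: "nat \<Rightarrow> real^'n" and d :: "nat \<Rightarrow> real^'n" and \<delta> :: "nat \<Rightarrow> real"
    and P :: "nat \<Rightarrow> real^'n^'n"
  assumes f_C2: "C2plus f"
    and f_lip: "lipschitz_grad L f"
    and g_proper: "proper_fun g" and g_lsc: "lsc_fun g"
    and g_wc: "weakly_convex \<rho> g" and rho_nonneg: "0 \<le> \<rho>"
    and argmin_ne: "\<exists>z. \<forall>y. ereal (f z) + g z \<le> ereal (f y) + g y"
    and level_bdd: "bounded {y. ereal (f y) + g y \<le> ereal (f (x 0)) + g (x 0)}"
    and gamma: "0 < \<gamma>" "\<gamma> * L < 1" "\<gamma> * \<rho> < 1"
    and delta0: "0 < \<delta> 0"
    and mu: "0 < \<mu>1" "\<mu>1 < \<mu>2" "\<mu>2 < 1"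
    and cs: "0 < c1" "c1 < c2" "c2 < 1" "1 < c3"
    and P_sel: "\<And>k. P k \<in> clarke_jac (prox \<gamma> g) (x k - \<gamma> *\<^sub>R grad f (x k))"
    and no_stop: "\<And>k. \<not> (residual \<gamma> f g (x k) = 0 \<and>
          lambda_min ((1 / \<gamma>) *\<^sub>R ((mat 1 - \<gamma> *\<^sub>R hess f (x k))
                        ** (mat 1 - P k ** (mat 1 - \<gamma> *\<^sub>R hess f (x k))))) \<ge> 0)"
    and d_feas: "\<And>k. norm (d k) \<le> \<delta> k"
    and x_upd: "\<And>k. x (Suc k) =
          (if (fbe \<gamma> f g (x k) - fbe \<gamma> f g (x k + d k)) /
              (tr_model (fbe \<gamma> f g) ((1 / \<gamma>) *\<^sub>R ((mat 1 - \<gamma> *\<^sub>R hess f (x k))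
                        ** (mat 1 - P k ** (mat 1 - \<gamma> *\<^sub>R hess f (x k))))) (x k) 0
               - tr_model (fbe \<gamma> f g) ((1 / \<gamma>) *\<^sub>R ((mat 1 - \<gamma> *\<^sub>R hess f (x k))
                        ** (mat 1 - P k ** (mat 1 - \<gamma> *\<^sub>R hess f (x k))))) (x k) (d k)) < \<mu>1
           then x k else x k + d k)"
    and delta_upd: "\<And>k. \<delta> (Suc k) =
          (let r = (fbe \<gamma> f g (x k) - fbe \<gamma> f g (x k + d k)) /
              (tr_model (fbe \<gamma> f g) ((1 / \<gamma>) *\<^sub>R ((mat 1 - \<gamma> *\<^sub>R hess f (x k))
                        ** (mat 1 - P k ** (mat 1 - \<gamma> *\<^sub>R hess f (x k))))) (x k) 0
               - tr_model (fbe \<gamma> f g) ((1 / \<gamma>) *\<^sub>R ((mat 1 - \<gamma> *\<^sub>R hess f (x k))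
                        ** (mat 1 - P k ** (mat 1 - \<gamma> *\<^sub>R hess f (x k))))) (x k) (d k))
           in if r < \<mu>1 then c1 * \<delta> k else if r < \<mu>2 then c2 * \<delta> k else c3 * \<delta> k)"
    and M_pos: "0 < M"
    and B_bdd: "\<And>k. onorm (\<lambda>v. ((1 / \<gamma>) *\<^sub>R ((mat 1 - \<gamma> *\<^sub>R hess f (x k))
                        ** (mat 1 - P k ** (mat 1 - \<gamma> *\<^sub>R hess f (x k))))) *v v) \<le> M"
    and beta: "0 < \<beta>" "\<beta> < 1"
    and decrease: "\<And>k.
          tr_model (fbe \<gamma> f g) ((1 / \<gamma>) *\<^sub>R ((mat 1 - \<gamma> *\<^sub>R hess f (x k))
                        ** (mat 1 - P k ** (mat 1 - \<gamma> *\<^sub>R hess f (x k))))) (x k) 0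
        - tr_model (fbe \<gamma> f g) ((1 / \<gamma>) *\<^sub>R ((mat 1 - \<gamma> *\<^sub>R hess f (x k))
                        ** (mat 1 - P k ** (mat 1 - \<gamma> *\<^sub>R hess f (x k))))) (x k) (d k)
        \<ge> \<beta> * norm (grad (fbe \<gamma> f g) (x k)) *
           (let nB = onorm (\<lambda>v. ((1 / \<gamma>) *\<^sub>R ((mat 1 - \<gamma> *\<^sub>R hess f (x k))
                        ** (mat 1 - P k ** (mat 1 - \<gamma> *\<^sub>R hess f (x k))))) *v v)
            in if nB = 0 then \<delta> k else min (\<delta> k) (norm (grad (fbe \<gamma> f g) (x k)) / nB))"
  shows "Liminf sequentially (\<lambda>k. ereal (norm (grad (fbe \<gamma> f g) (x k)))) = 0"
proof -
  interpret composite_problem f g L \<rho> \<gamma>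
    using f_C2 f_lip g_proper g_lsc g_wc argmin_ne gamma by unfold_locales
  interpret trust_region_iteration "fbe \<gamma> f g"
    "\<lambda>k. (1 / \<gamma>) *\<^sub>R ((mat 1 - \<gamma> *\<^sub>R hess f (x k)) ** (mat 1 - P k ** (mat 1 - \<gamma> *\<^sub>R hess f (x k))))"
    x d \<delta> \<mu>1 \<mu>2 c1 c2 c3 M \<beta>
  proof unfold_locales
    show "(fbe \<gamma> f g has_derivative (\<lambda>h. grad (fbe \<gamma> f g) y \<bullet> h)) (at y)" for y
      unfolding grad_fbe by (rule has_derivative_fbe)
  qed (use continuous_on_grad_fbe bdd_below_fbe bounded_fbe_level_set[OF level_bdd] delta0 mu cs
      d_feas x_upd delta_upd M_pos B_bdd beta decrease in auto)
  show ?thesis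
    by (rule liminf_norm_grad_eq_0)
qed

end
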